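(* In the affine setting described in the context, let $\sigma\in(0,1]$ and let $f,\alpha,s:I^q\to\mathbb{R}$ be Hölder continuous with exponent $\sigma$, with $s=f$ at the vertices of $I^q$. Let $a=\min\{|a_{k,i}|:1\le k\le q,\ 1\le i\le M_k\}$ and suppose $\max\{\|\alpha\|_\infty/a^\sigma,\ \|\alpha\|_\infty+[\alpha]_\sigma\}<1$. Let $g^{\alpha^g}:I\to\mathbb{R}$, $g^{\alpha^g}(x)=f^\alpha(x,0,\dots,0)$. Then $g^{\alpha^g}$ is Hölder continuous with exponent $\sigma$, and $$1\le\dim_H\mathcal{G}(g^{\alpha^g})\le\underline{\dim}_B\mathcal{G}(g^{\alpha^g})\le\overline{\dim}_B\mathcal{G}(g^{\alpha^g})\le2-\sigma.$$
   Context: Affine setting: $I=[0,1]$; for each $k\in\{1,\dots,q\}$, $M_k\ge2$ and $0=x_{k,0}<\dots<x_{k,M_k}=1$, $I_{k,i}=[x_{k,i-1},x_{k,i}]$. For $1\le i\le M_k$, $u_{k,i}:I\to I_{k,i}$ is affine, $u_{k,i}(x)=a_{k,i}x+b_{k,i}$, with $a_{k,i}=x_{k,i}-x_{k,i-1}$, $b_{k,i}=x_{k,i-1}$ if $i$ is odd and $a_{k,i}=x_{k,i-1}-x_{k,i}$, $b_{k,i}=x_{k,i}$ if $i$ is even. For $i=(i_1,\dots,i_q)$, $u_i(y)=(u_{1,i_1}(y_1),\dots,u_{q,i_q}(y_q))$. Given $f,\alpha,s\in\mathcal{C}(I^q)$ with $\|\alpha\|_\infty<1$ and $s=f$ at the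 vertices of $I^q$, the $\alpha$-fractal function $f^\alpha$ is the unique continuous $f^\alpha:I^q\to\mathbb{R}$ with $f^\alpha(x)=f(x)+\alpha(x)[f^\alpha(u_i^{-1}(x))-s(u_i^{-1}(x))]$ for all $i\in\prod_k\{1,\dots,M_k\}$ and $x\in\prod_k I_{k,i_k}$. Hölder: $|h(x)-h(y)|\le K\|x-y\|_2^\sigma$; $[h]_\sigma=\sup_{x\ne y}|h(x)-h(y)|/\|x-y\|_2^\sigma$. $\mathcal{G}(h)$ is the graph of $h$; $\dim_H,\underline{\dim}_B,\overline{\dim}_B$ are Hausdorff, lower box, upper box dimension. *)

theory Defs
  imports "HOL-Analysis.Analysis"
begin

definition holder_on :: "real \<Rightarrow> 'a::metric_space set \<Rightarrow> ('a \<Rightarrow> real) \<Rightarrow> bool" where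
  "holder_on \<sigma> S h \<longleftrightarrow> (\<exists>K. \<forall>x\<in>S. \<forall>y\<in>S. \<bar>h x - h y\<bar> \<le> K * dist x y powr \<sigma>)"

definition holder_seminorm :: "real \<Rightarrow> 'a::metric_space set \<Rightarrow> ('a \<Rightarrow> real) \<Rightarrow> real" where
  "holder_seminorm \<sigma> S h = (SUP p\<in>{(x,y). x \<in> S \<and> y \<in> S \<and> x \<noteq> y}.
      \<bar>h (fst p) - h (snd p)\<bar> / dist (fst p) (snd p) powr \<sigma>)"

definition sup_norm_on :: "'a set \<Rightarrow> ('a \<Rightarrow> real) \<Rightarrow> real" where
  "sup_norm_on S h = (SUP x\<in>S. \<bar>h x\<bar>)"

text \<open>Points of I^q are vectors in real^'q (Euclidean norm). For coordinate k,
  xp k 0 < ... < xp k (M k) is the partition.\<close>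

definition aff_a :: "('q \<Rightarrow> nat \<Rightarrow> real) \<Rightarrow> 'q \<Rightarrow> nat \<Rightarrow> real" where
  "aff_a xp k i = (if odd i then xp k i - xp k (i - 1) else xp k (i - 1) - xp k i)"

definition aff_b :: "('q \<Rightarrow> nat \<Rightarrow> real) \<Rightarrow> 'q \<Rightarrow> nat \<Rightarrow> real" where
  "aff_b xp k i = (if odd i then xp k (i - 1) else xp k i)"

definition u_map :: "('q::finite \<Rightarrow> nat \<Rightarrow> real) \<Rightarrow> ('q \<Rightarrow> nat) \<Rightarrow> real^'q \<Rightarrow> real^'q" where
  "u_map xp i y = (\<chi> k. aff_a xp k (i k) * y $ k + aff_b xp k (i k))"

definition u_inv :: "('q::finite \<Rightarrow> nat \<Rightarrow> real) \<Rightarrow> ('q \<Rightarrow> nat) \<Rightarrow> real^'q \<Rightarrow> real^'q" where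
  "u_inv xp i x = (\<chi> k. (x $ k - aff_b xp k (i k)) / aff_a xp k (i k))"

definition valid_partition :: "('q::finite \<Rightarrow> nat) \<Rightarrow> ('q \<Rightarrow> nat \<Rightarrow> real) \<Rightarrow> bool" where
  "valid_partition M xp \<longleftrightarrow> (\<forall>k. 2 \<le> M k \<and> xp k 0 = 0 \<and> xp k (M k) = 1 \<and>
      (\<forall>i. 1 \<le> i \<and> i \<le> M k \<longrightarrow> xp k (i - 1) < xp k i))"

definition unit_cube :: "(real^'q::finite) set" where
  "unit_cube = cbox 0 One"

definition cube_vertices :: "(real^'q::finite) set" where
  "cube_vertices = {y. \<forall>k. y $ k = 0 \<or> y $ k = 1}"

definition a_min :: "('q::finite \<Rightarrow> nat) \<Rightarrow> ('q \<Rightarrow> nat \<Rightarrow> real) \<Rightarrow> real" where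
  "a_min M xp = Min {\<bar>aff_a xp k i\<bar> | k i. 1 \<le> i \<and> i \<le> M k}"

definition is_alpha_fractal ::
  "('q::finite \<Rightarrow> nat) \<Rightarrow> ('q \<Rightarrow> nat \<Rightarrow> real) \<Rightarrow> (real^'q \<Rightarrow> real) \<Rightarrow> (real^'q \<Rightarrow> real)
     \<Rightarrow> (real^'q \<Rightarrow> real) \<Rightarrow> (real^'q \<Rightarrow> real) \<Rightarrow> bool" where
  "is_alpha_fractal M xp f \<alpha> s F \<longleftrightarrow> continuous_on unit_cube F \<and>
     (\<forall>i. (\<forall>k. 1 \<le> i k \<and> i k \<le> M k) \<longrightarrow>
        (\<forall>x. (\<forall>k. xp k (i k - 1) \<le> x $ k \<and> x $ k \<le> xp k (i k)) \<longrightarrow>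
           F x = f x + \<alpha> x * (F (u_inv xp i x) - s (u_inv xp i x))))"

definition hausdorff_content :: "real \<Rightarrow> real \<Rightarrow> 'a::metric_space set \<Rightarrow> ennreal" where
  "hausdorff_content s \<delta> E = (INF C\<in>{C :: nat \<Rightarrow> 'a set. E \<subseteq> (\<Union>j. C j) \<and>
        (\<forall>j. bounded (C j) \<and> diameter (C j) \<le> \<delta>)}.
      (\<Sum>j. ennreal (diameter (C j) powr s)))"

definition hausdorff_measure :: "real \<Rightarrow> 'a::metric_space set \<Rightarrow> ennreal" where
  "hausdorff_measure s E = (SUP \<delta>\<in>{0<..}. hausdorff_content s \<delta> E)"

definition hausdorff_dim :: "'a::metric_space set \<Rightarrow> ereal" where
  "hausdorff_dim E = Inf {ereal s | s. 0 < s \<and> hausdorff_measure s E = 0}"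

definition box_count :: "real \<Rightarrow> 'a::metric_space set \<Rightarrow> nat" where
  "box_count \<delta> E = (LEAST n. \<exists>C :: nat \<Rightarrow> 'a set. E \<subseteq> (\<Union>j<n. C j) \<and>
        (\<forall>j<n. bounded (C j) \<and> diameter (C j) \<le> \<delta>))"

definition lower_box_dim :: "'a::metric_space set \<Rightarrow> ereal" where
  "lower_box_dim E = Liminf (at_right 0) (\<lambda>\<delta>. ereal (ln (real (box_count \<delta> E)) / - ln \<delta>))"

definition upper_box_dim :: "'a::metric_space set \<Rightarrow> ereal" where
  "upper_box_dim E = Limsup (at_right 0) (\<lambda>\<delta>. ereal (ln (real (box_count \<delta> E)) / - ln \<delta>))"

definition graph_of :: "real set \<Rightarrow> (real \<Rightarrow> real) \<Rightarrow> (real \<times> real) set" where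
  "graph_of S h = {(x, h x) | x. x \<in> S}"

end

theory Submission
  imports Defs
begin

(*
  On the k0-th coordinate axis the self-referential equation of F restricts to
  g x = f x + alpha x * (g (phi_i x) - s (phi_i x)) on the i-th piece of the partition,
  where phi_i is the affine map of that piece onto [0,1].  Hence on one piece the
  oscillation of g is at most C |x - y|^sigma plus ||alpha|| times the oscillation between
  the rescaled points, which are at most 1/a times farther apart.  Since
  ||alpha|| / a^sigma < 1, iterating this contraction yields a Hoelder bound for g; nearby
  points in adjacent pieces are compared through their common breakpoint, which phi_i
  sends to 0 or 1.

  A sigma-Hoelder graph over [0,1] meets O(delta^(sigma-2)) grid squares of side delta,
  which bounds the upper box dimension by 2 - sigma; the graph projects onto [0,1], so
  its Hausdorff dimension is at least 1; and for compact sets the Hausdorff dimension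
  never exceeds the lower box dimension.
*)

section \<open>Box-counting numbers\<close>

lemma diameter_le_dist:
  fixes S :: "'a::metric_space set"
  assumes "0 \<le> \<delta>" "\<And>x y. x \<in> S \<Longrightarrow> y \<in> S \<Longrightarrow> dist x y \<le> \<delta>"
  shows "diameter S \<le> \<delta>"
  using assms by (auto simp: diameter_def intro: cSUP_least)

lemma finite_cover_enumerated:
  fixes E :: "'a::metric_space set"
  assumes "finite \<A>" "E \<subseteq> \<Union>\<A>" "\<And>A. A \<in> \<A> \<Longrightarrow> bounded A \<and> diameter A \<le> \<delta>"
  shows "\<exists>C :: nat \<Rightarrow> 'a set. E \<subseteq> (\<Union>j<card \<A>. C j) \<and>
    (\<forall>j<card \<A>. bounded (C j) \<and> diameter (C j) \<le> \<delta>)"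
proof -
  obtain h where h: "bij_betw h {..<card \<A>} \<A>"
    using ex_bij_betw_nat_finite[OF assms(1)] by (auto simp: lessThan_atLeast0)
  then have "h ` {..<card \<A>} = \<A>" by (simp add: bij_betw_def)
  then show ?thesis using assms(2,3) by (intro exI[of _ h]) auto
qed

lemma box_count_le_card:
  fixes E :: "'a::metric_space set"
  assumes "finite \<A>" "E \<subseteq> \<Union>\<A>" "\<And>A. A \<in> \<A> \<Longrightarrow> bounded A \<and> diameter A \<le> \<delta>"
  shows "box_count \<delta> E \<le> card \<A>"
  unfolding box_count_def by (rule Least_le) (rule finite_cover_enumerated[OF assms])

lemma compact_finite_cover:
  fixes E :: "'a::metric_space set"
  assumes "compact E" "0 < \<delta>"
  obtains \<A> where "finite \<A>" "E \<subseteq> \<Union>\<A>" "\<And>A. A \<in> \<A> \<Longrightarrow> bounded A \<and> diameter A \<le> \<delta>"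
proof -
  have "E \<subseteq> (\<Union>x\<in>E. ball x (\<delta>/2))" using assms(2) by auto
  then obtain X where "finite X" "E \<subseteq> (\<Union>x\<in>X. ball x (\<delta>/2))"
    using compactE_image[OF assms(1)] by (metis open_ball)
  moreover have "diameter (ball x (\<delta>/2)) \<le> \<delta>" for x
  proof (rule diameter_le_dist)
    fix u v assume "u \<in> ball x (\<delta>/2)" "v \<in> ball x (\<delta>/2)"
    then show "dist u v \<le> \<delta>" using dist_triangle2[of u v x] by (simp add: dist_commute)
  qed (use assms in simp)
  ultimately show ?thesis by (intro that[of "(\<lambda>x. ball x (\<delta>/2)) ` X"]) auto
qed

lemma box_count_cover:
  fixes E :: "'a::metric_space set"
  assumes "compact E" "0 < \<delta>"
  obtains C :: "nat \<Rightarrow> 'a set" where "E \<subseteq> (\<Union>j<box_count \<delta> E. C j)"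
    "\<And>j. j < box_count \<delta> E \<Longrightarrow> bounded (C j) \<and> diameter (C j) \<le> \<delta>"
proof -
  define P where "P n \<longleftrightarrow> (\<exists>C :: nat \<Rightarrow> 'a set. E \<subseteq> (\<Union>j<n. C j) \<and>
      (\<forall>j<n. bounded (C j) \<and> diameter (C j) \<le> \<delta>))" for n
  obtain \<A> where "finite \<A>" "E \<subseteq> \<Union>\<A>" "\<And>A. A \<in> \<A> \<Longrightarrow> bounded A \<and> diameter A \<le> \<delta>"
    using compact_finite_cover[OF assms] by blast
  then have "P (card \<A>)" unfolding P_def by (rule finite_cover_enumerated)
  then have "P (LEAST n. P n)" by (rule LeastI)
  moreover have "(LEAST n. P n) = box_count \<delta> E" unfolding box_count_def P_def ..
  ultimately show ?thesis using that unfolding P_def by auto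
qed

lemma box_count_pos:
  fixes E :: "'a::metric_space set"
  assumes "compact E" "E \<noteq> {}" "0 < \<delta>"
  shows "1 \<le> box_count \<delta> E"
proof -
  obtain C where C: "E \<subseteq> (\<Union>j<box_count \<delta> E. C j)"
    "\<And>j. j < box_count \<delta> E \<Longrightarrow> bounded (C j) \<and> diameter (C j) \<le> \<delta>"
    using box_count_cover[OF assms(1,3)] by metis
  have "box_count \<delta> E \<noteq> 0"
  proof
    assume "box_count \<delta> E = 0"
    then show False using C(1) assms(2) by simp
  qed
  then show ?thesis by simp
qed

section \<open>Hausdorff and box dimensions\<close>

lemma hausdorff_content_antimono:
  "\<delta>' \<le> \<delta> \<Longrightarrow> hausdorff_content s \<delta> E \<le> hausdorff_content s \<delta>' E"
  unfolding hausdorff_content_def by (rule INF_superset_mono) (auto intro: order_trans)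

lemma hausdorff_content_le_finite_cover:
  fixes E :: "'a::metric_space set"
  assumes "E \<subseteq> (\<Union>j<n. C j)" "\<And>j. j < n \<Longrightarrow> bounded (C j) \<and> diameter (C j) \<le> \<delta>"
    and "0 < s" "0 \<le> \<delta>"
  shows "hausdorff_content s \<delta> E \<le> ennreal (real n * \<delta> powr s)"
proof -
  define C' where "C' j = (if j < n then C j else {})" for j
  have "hausdorff_content s \<delta> E \<le> (\<Sum>j. ennreal (diameter (C' j) powr s))"
    unfolding hausdorff_content_def using assms by (intro INF_lower) (auto simp: C'_def)
  also have "\<dots> = ennreal (\<Sum>j<n. diameter (C' j) powr s)"
    by (subst suminf_finite[of "{..<n}"]) (auto simp: C'_def)
  also have "\<dots> \<le> ennreal (\<Sum>j<n. \<delta> powr s)"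
    using assms by (intro ennreal_leI sum_mono powr_mono2) (auto simp: C'_def intro!: diameter_ge_0)
  finally show ?thesis by simp
qed

lemma hausdorff_measure_eq_0_if_box_count_small:
  fixes E :: "'a::metric_space set"
  assumes "compact E" "0 < r" "t < r"
    and small: "frequently (\<lambda>\<delta>. real (box_count \<delta> E) < \<delta> powr (-t)) (at_right 0)"
  shows "hausdorff_measure r E = 0"
proof -
  have "hausdorff_content r \<delta> E \<le> ennreal \<epsilon>" if "0 < \<delta>" "0 < \<epsilon>" for \<delta> \<epsilon>
  proof -
    define b where "b = min \<delta> (\<epsilon> powr (1/(r-t)))"
    have "0 < b" using that by (simp add: b_def)
    then have "frequently (\<lambda>\<delta>'. real (box_count \<delta>' E) < \<delta>' powr (-t) \<and> \<delta>' \<in> {0<..<b}) (at_right 0)"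
      by (rule frequently_eventually_frequently[OF small eventually_at_right_real])
    then obtain \<delta>' where N: "real (box_count \<delta>' E) < \<delta>' powr (-t)" and \<delta>': "0 < \<delta>'" "\<delta>' < b"
      by (auto dest: frequently_ex)
    obtain C where "E \<subseteq> (\<Union>j<box_count \<delta>' E. C j)"
      "\<And>j. j < box_count \<delta>' E \<Longrightarrow> bounded (C j) \<and> diameter (C j) \<le> \<delta>'"
      using box_count_cover[OF assms(1) \<delta>'(1)] by metis
    then have "hausdorff_content r \<delta>' E \<le> ennreal (real (box_count \<delta>' E) * \<delta>' powr r)"
      using \<delta>' assms(2) by (intro hausdorff_content_le_finite_cover) auto
    also have "\<dots> \<le> ennreal \<epsilon>"
    proof (rule ennreal_leI)
      have "real (box_count \<delta>' E) * \<delta>' powr r \<le> \<delta>' powr (-t) * \<delta>' powr r"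
        using N by (intro mult_right_mono) auto
      also have "\<dots> = \<delta>' powr (r - t)" by (simp add: powr_add[symmetric])
      also have "\<dots> \<le> (\<epsilon> powr (1/(r-t))) powr (r - t)"
        using \<delta>' assms(3) by (intro powr_mono2) (auto simp: b_def)
      also have "\<dots> = \<epsilon>" using assms(3) that by (simp add: powr_powr)
      finally show "real (box_count \<delta>' E) * \<delta>' powr r \<le> \<epsilon>" .
    qed
    moreover have "\<delta>' \<le> \<delta>" using \<delta>' by (simp add: b_def)
    ultimately show ?thesis by (metis hausdorff_content_antimono order_trans)
  qed
  then have "hausdorff_content r \<delta> E = 0" if "0 < \<delta>" for \<delta>
    using that by (metis add_0 ennreal_le_epsilon le_zero_eq)
  then show ?thesis unfolding hausdorff_measure_def by (simp add: SUP_constant)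
qed

lemma box_dimension_ratio_nonneg:
  fixes E :: "'a::metric_space set"
  assumes "compact E" "E \<noteq> {}"
  shows "eventually (\<lambda>\<delta>. 0 \<le> ereal (ln (real (box_count \<delta> E)) / - ln \<delta>)) (at_right 0)"
  using eventually_at_right_real[OF zero_less_one]
proof (rule eventually_mono)
  fix \<delta> :: real assume "\<delta> \<in> {0<..<1}"
  moreover have "0 \<le> ln (real (box_count \<delta> E))" using box_count_pos[OF assms] calculation by simp
  ultimately show "0 \<le> ereal (ln (real (box_count \<delta> E)) / - ln \<delta>)"
    by (simp add: divide_nonneg_neg)
qed

lemma hausdorff_dim_le_lower_box_dim:
  fixes E :: "'a::metric_space set"
  assumes "compact E" "E \<noteq> {}"
  shows "hausdorff_dim E \<le> lower_box_dim E"
proof (rule dense_ge)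
  fix y assume y: "lower_box_dim E < y"
  have "0 \<le> lower_box_dim E"
    unfolding lower_box_dim_def using box_dimension_ratio_nonneg[OF assms] by (rule Liminf_bounded)
  then obtain l where l: "lower_box_dim E = ereal l" "0 \<le> l"
    using y by (cases "lower_box_dim E") auto
  show "hausdorff_dim E \<le> y"
  proof (cases y)
    case (real r)
    define t where "t = (l + r) / 2"
    have "l < r" using y l real by simp
    have "frequently (\<lambda>\<delta>. ereal (ln (real (box_count \<delta> E)) / - ln \<delta>) < ereal t) (at_right 0)"
    proof (rule ccontr)
      assume "\<not> ?thesis"
      then have "eventually (\<lambda>\<delta>. ereal t \<le> ereal (ln (real (box_count \<delta> E)) / - ln \<delta>)) (at_right 0)"
        by (simp add: not_frequently not_less)
      then have "ereal t \<le> lower_box_dim E" unfolding lower_box_dim_def by (rule Liminf_bounded)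
      then show False using l \<open>l < r\<close> by (simp add: t_def)
    qed
    then have "frequently (\<lambda>\<delta>. real (box_count \<delta> E) < \<delta> powr (-t)) (at_right 0)"
    proof (rule frequently_mp[rotated],
        intro eventually_mono[OF eventually_at_right_real[OF zero_less_one]] impI)
      fix \<delta> :: real assume \<delta>: "\<delta> \<in> {0<..<1}"
        and "ereal (ln (real (box_count \<delta> E)) / - ln \<delta>) < ereal t"
      moreover have "0 < - ln \<delta>" using \<delta> by simp
      ultimately have "ln (real (box_count \<delta> E)) < t * - ln \<delta>"
        by (simp only: less_ereal.simps pos_divide_less_eq)
      also have "\<dots> = ln (\<delta> powr (-t))" using \<delta> by (simp add: ln_powr)
      finally show "real (box_count \<delta> E) < \<delta> powr (-t)"
        using box_count_pos[OF assms, of \<delta>] \<delta> by (subst (asm) ln_less_cancel_iff) auto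
    qed
    then have "hausdorff_measure r E = 0"
      using l \<open>l < r\<close>
      by (intro hausdorff_measure_eq_0_if_box_count_small[OF assms(1)]) (auto simp: t_def)
    then show ?thesis
      unfolding hausdorff_dim_def real using l \<open>l < r\<close> by (intro Inf_lower) auto
  qed (use y in auto)
qed

lemma lower_box_dim_le_upper_box_dim: "lower_box_dim E \<le> upper_box_dim E"
  unfolding lower_box_dim_def upper_box_dim_def by (rule Liminf_le_Limsup) simp

section \<open>Hoelder functions and their graphs\<close>

lemma holder_onE:
  assumes "holder_on \<sigma> S h"
  obtains K where "0 \<le> K" "\<And>x y. x \<in> S \<Longrightarrow> y \<in> S \<Longrightarrow> \<bar>h x - h y\<bar> \<le> K * dist x y powr \<sigma>"
proof -
  obtain K where K: "\<forall>x\<in>S. \<forall>y\<in>S. \<bar>h x - h y\<bar> \<le> K * dist x y powr \<sigma>"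
    using assms unfolding holder_on_def by blast
  show ?thesis
  proof (rule that[of "max K 0"])
    fix x y assume "x \<in> S" "y \<in> S"
    then show "\<bar>h x - h y\<bar> \<le> max K 0 * dist x y powr \<sigma>"
      using K mult_right_mono[of K "max K 0" "dist x y powr \<sigma>"] by force
  qed simp
qed

lemma holder_on_imp_continuous_on:
  assumes "holder_on \<sigma> S h" "0 < \<sigma>"
  shows "continuous_on S h"
proof -
  obtain K where K: "0 \<le> K" "\<And>x y. x \<in> S \<Longrightarrow> y \<in> S \<Longrightarrow> \<bar>h x - h y\<bar> \<le> K * dist x y powr \<sigma>"
    using holder_onE[OF assms(1)] by blast
  show ?thesis unfolding continuous_on_iff
  proof (intro ballI allI impI)
    fix x e assume x: "x \<in> S" and e: "0 < (e::real)"
    define d where "d = (e / (K + 1)) powr (1/\<sigma>)"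
    have "d powr \<sigma> = e / (K + 1)" using e K(1) assms(2) by (simp add: d_def powr_powr)
    show "\<exists>d>0. \<forall>x'\<in>S. dist x' x < d \<longrightarrow> dist (h x') (h x) < e"
    proof (intro exI[of _ d] conjI ballI impI)
      show "0 < d" using e K(1) by (simp add: d_def)
      fix x' assume x': "x' \<in> S" and "dist x' x < d"
      then have "dist x' x powr \<sigma> < e / (K + 1)"
        using \<open>d powr \<sigma> = e / (K + 1)\<close> assms(2) by (metis zero_le_dist powr_less_mono2)
      then have "(K + 1) * dist x' x powr \<sigma> < e"
        using K(1) by (simp add: field_simps)
      moreover have "K * dist x' x powr \<sigma> \<le> (K + 1) * dist x' x powr \<sigma>"
        by (intro mult_right_mono) auto
      ultimately have "K * dist x' x powr \<sigma> < e" by linarith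
      then show "dist (h x') (h x) < e" using K(2)[OF x' x] by (simp add: dist_real_def)
    qed
  qed
qed

lemma abs_le_sup_norm_on:
  assumes "bounded (h ` S)" "x \<in> S"
  shows "\<bar>h x\<bar> \<le> sup_norm_on S h"
proof -
  have "bdd_above ((\<lambda>x. \<bar>h x\<bar>) ` S)"
    using assms(1) by (auto simp: bounded_iff intro: bdd_aboveI2)
  then show ?thesis unfolding sup_norm_on_def using assms(2) by (rule cSUP_upper2) simp
qed

lemma holder_quotient_le_seminorm:
  assumes "holder_on \<sigma> S h" "x \<in> S" "y \<in> S" "x \<noteq> y"
  shows "\<bar>h x - h y\<bar> / dist x y powr \<sigma> \<le> holder_seminorm \<sigma> S h"
proof -
  obtain K where K: "0 \<le> K" "\<And>x y. x \<in> S \<Longrightarrow> y \<in> S \<Longrightarrow> \<bar>h x - h y\<bar> \<le> K * dist x y powr \<sigma>"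
    using holder_onE[OF assms(1)] by blast
  have "bdd_above ((\<lambda>p. \<bar>h (fst p) - h (snd p)\<bar> / dist (fst p) (snd p) powr \<sigma>) `
      {(x, y). x \<in> S \<and> y \<in> S \<and> x \<noteq> y})"
    using K(2) by (intro bdd_aboveI2[where M = K]) (auto simp: divide_le_eq)
  then show ?thesis
    unfolding holder_seminorm_def using assms(2-4) by (intro cSUP_upper2[where x = "(x, y)"]) auto
qed

lemma abs_diff_le_holder_seminorm:
  assumes "holder_on \<sigma> S h" "x \<in> S" "y \<in> S"
  shows "\<bar>h x - h y\<bar> \<le> holder_seminorm \<sigma> S h * dist x y powr \<sigma>"
proof (cases "x = y")
  case False
  then show ?thesis using holder_quotient_le_seminorm[OF assms False] by (simp add: divide_le_eq)
qed simp

lemma holder_seminorm_nonneg: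
  assumes "holder_on \<sigma> S h" "x \<in> S" "y \<in> S" "x \<noteq> y"
  shows "0 \<le> holder_seminorm \<sigma> S h"
  using holder_quotient_le_seminorm[OF assms] by (smt (verit) divide_nonneg_nonneg powr_ge_zero)

lemma compact_graph:
  assumes "continuous_on {0..1} h"
  shows "compact (graph_of {0..1} h)"
proof -
  have "graph_of {0..1} h = (\<lambda>x. (x, h x)) ` {0..1}" by (auto simp: graph_of_def)
  then show ?thesis
    using compact_continuous_image[OF continuous_on_Pair[OF continuous_on_id assms]] by simp
qed

lemma grid_count_estimate:
  fixes w K \<sigma> :: real
  assumes "0 < w" "w \<le> 1" "0 \<le> K" "0 < \<sigma>" "\<sigma> \<le> 1"
  shows "(1/w + 1) * (2*K*w powr (\<sigma>-1) + 2) \<le> 4*(K+1) * w powr (\<sigma>-2)"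
proof -
  have "w powr (1 - \<sigma>) \<le> 1" "0 < w powr (1 - \<sigma>)" using assms by (auto intro: powr_le1)
  moreover have "w powr (\<sigma> - 1) = inverse (w powr (1 - \<sigma>))" by (simp add: powr_minus[symmetric])
  ultimately have one_le: "1 \<le> w powr (\<sigma> - 1)" by (simp add: one_le_inverse)
  have "1/w + 1 \<le> 2/w" using assms by (simp add: field_simps)
  moreover have "2*K*w powr (\<sigma>-1) + 2 \<le> (2*K+2) * w powr (\<sigma>-1)"
    using one_le by (simp add: algebra_simps)
  ultimately have "(1/w + 1) * (2*K*w powr (\<sigma>-1) + 2) \<le> (2/w) * ((2*K+2) * w powr (\<sigma>-1))"
    using assms by (intro mult_mono) auto
  also have "\<dots> = 4*(K+1) * (w powr (\<sigma>-1) / w)" by (simp add: field_simps)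
  also have "w powr (\<sigma>-1) / w = w powr (\<sigma>-2)"
    using assms(1) powr_diff[of w "\<sigma>-1" 1] by simp
  finally show ?thesis .
qed

lemma graph_grid_index_bounds:
  fixes h :: "real \<Rightarrow> real"
  assumes "0 < \<sigma>" "0 \<le> K" "0 < w" "x \<in> {0..1}"
    and hol: "\<And>x y. x \<in> {0..1} \<Longrightarrow> y \<in> {0..1} \<Longrightarrow> \<bar>h x - h y\<bar> \<le> K * \<bar>x - y\<bar> powr \<sigma>"
  defines "j \<equiv> \<lfloor>x/w\<rfloor>"
  shows "0 \<le> j" "j \<le> \<lfloor>1/w\<rfloor>"
    "\<lfloor>(h (j*w) - K*w powr \<sigma>)/w\<rfloor> \<le> \<lfloor>h x/w\<rfloor>" "\<lfloor>h x/w\<rfloor> \<le> \<lfloor>(h (j*w) + K*w powr \<sigma>)/w\<rfloor>"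
proof -
  show "0 \<le> j" "j \<le> \<lfloor>1/w\<rfloor>"
    unfolding j_def using assms(3,4) by (auto intro!: floor_mono divide_right_mono)
  have "real_of_int j \<le> x/w" "x/w < real_of_int j + 1" unfolding j_def by linarith+
  then have jw: "real_of_int j * w \<le> x" "x < real_of_int j * w + w"
    using assms(3) by (auto simp: field_simps)
  then have "real_of_int j * w \<in> {0..1}" using assms(3,4) \<open>0 \<le> j\<close> by auto
  then have "\<bar>h x - h (j*w)\<bar> \<le> K * \<bar>x - j*w\<bar> powr \<sigma>" using hol assms(4) by blast
  also have "\<dots> \<le> K * w powr \<sigma>" using jw assms by (intro mult_left_mono powr_mono2) auto
  finally show "\<lfloor>(h (j*w) - K*w powr \<sigma>)/w\<rfloor> \<le> \<lfloor>h x/w\<rfloor>" "\<lfloor>h x/w\<rfloor> \<le> \<lfloor>(h (j*w) + K*w powr \<sigma>)/w\<rfloor>"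
    using assms(3) by (auto intro!: floor_mono divide_right_mono)
qed

text \<open>
  Over a column of width w the graph varies by at most K w^\<sigma>, so it meets at most
  2 K w^(\<sigma>-1) + 2 cells of the column.
\<close>
lemma card_graph_grid_cells:
  fixes h :: "real \<Rightarrow> real"
  assumes "0 < \<sigma>" "0 \<le> K" "0 < w"
    and hol: "\<And>x y. x \<in> {0..1} \<Longrightarrow> y \<in> {0..1} \<Longrightarrow> \<bar>h x - h y\<bar> \<le> K * \<bar>x - y\<bar> powr \<sigma>"
  defines "J \<equiv> (\<lambda>x. (\<lfloor>x/w\<rfloor>, \<lfloor>h x/w\<rfloor>)) ` {0..1}"
  shows "finite J" "real (card J) \<le> (1/w + 1) * (2*K*w powr (\<sigma>-1) + 2)"
proof -
  define N where "N = \<lfloor>1/w\<rfloor>"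
  define lo where "lo j = \<lfloor>(h (j*w) - K*w powr \<sigma>)/w\<rfloor>" for j :: int
  define hi where "hi j = \<lfloor>(h (j*w) + K*w powr \<sigma>)/w\<rfloor>" for j :: int
  define S where "S = Sigma {0..N} (\<lambda>j. {lo j..hi j})"
  have "J \<subseteq> S"
    using graph_grid_index_bounds[OF assms(1-3) _ hol]
    unfolding J_def S_def N_def lo_def hi_def by fastforce
  moreover have "finite S" unfolding S_def by auto
  ultimately show "finite J" by (rule finite_subset)
  have column: "real (nat (hi j - lo j + 1)) \<le> 2*K*w powr (\<sigma>-1) + 2" for j
  proof -
    have "real_of_int (hi j) - real_of_int (lo j)
        \<le> (h (j*w) + K*w powr \<sigma>)/w - (h (j*w) - K*w powr \<sigma>)/w + 1"
      unfolding hi_def lo_def by linarith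
    also have "\<dots> = 2*K*w powr (\<sigma>-1) + 1"
      using assms(3) by (simp add: field_simps powr_diff)
    finally show ?thesis using assms(2,3) by (cases "0 \<le> hi j - lo j + 1") auto
  qed
  have "real (card J) \<le> real (card S)" using \<open>J \<subseteq> S\<close> \<open>finite S\<close> by (simp add: card_mono)
  also have "card S = (\<Sum>j\<in>{0..N}. card {lo j..hi j})" unfolding S_def by (rule card_SigmaI) auto
  also have "real \<dots> \<le> (\<Sum>j\<in>{0..N}. 2*K*w powr (\<sigma>-1) + 2)"
    unfolding of_nat_sum using column by (intro sum_mono) simp
  also have "\<dots> = real_of_int (N + 1) * (2*K*w powr (\<sigma>-1) + 2)"
    using assms(3) by (simp add: N_def)
  also have "\<dots> \<le> (1/w + 1) * (2*K*w powr (\<sigma>-1) + 2)"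
    using assms unfolding N_def by (intro mult_right_mono) (auto simp: add_increasing)
  finally show "real (card J) \<le> (1/w + 1) * (2*K*w powr (\<sigma>-1) + 2)" .
qed

lemma floor_divide_mult_bounds:
  fixes t w :: real
  assumes "0 < w"
  shows "real_of_int \<lfloor>t/w\<rfloor> * w \<le> t" "t \<le> real_of_int \<lfloor>t/w\<rfloor> * w + w"
proof -
  have "real_of_int \<lfloor>t/w\<rfloor> \<le> t/w" "t/w \<le> real_of_int \<lfloor>t/w\<rfloor> + 1" by linarith+
  then have "real_of_int \<lfloor>t/w\<rfloor> * w \<le> t/w * w" "t/w * w \<le> (real_of_int \<lfloor>t/w\<rfloor> + 1) * w"
    using assms by (intro mult_right_mono; simp)+
  then show "real_of_int \<lfloor>t/w\<rfloor> * w \<le> t" "t \<le> real_of_int \<lfloor>t/w\<rfloor> * w + w"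
    using assms by (simp_all add: distrib_right)
qed

lemma square_diameter_le:
  fixes a b w :: real
  assumes "0 \<le> w"
  shows "bounded ({a..a + w} \<times> {b..b + w})" "diameter ({a..a + w} \<times> {b..b + w}) \<le> 2 * w"
proof -
  show "bounded ({a..a + w} \<times> {b..b + w})" by (intro bounded_Times) auto
  show "diameter ({a..a + w} \<times> {b..b + w}) \<le> 2 * w"
  proof (rule diameter_le_dist)
    fix u v assume "u \<in> {a..a + w} \<times> {b..b + w}" "v \<in> {a..a + w} \<times> {b..b + w}"
    then have "\<bar>fst u - fst v\<bar> \<le> w" "\<bar>snd u - snd v\<bar> \<le> w" by (auto simp: abs_le_iff)
    moreover have "dist u v \<le> \<bar>fst u - fst v\<bar> + \<bar>snd u - snd v\<bar>"
      using sqrt_sum_squares_le_sum_abs[of "fst u - fst v" "snd u - snd v"]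
      by (simp add: dist_prod_def dist_real_def)
    ultimately show "dist u v \<le> 2 * w" by simp
  qed (use assms in simp)
qed

lemma holder_graph_box_count:
  fixes h :: "real \<Rightarrow> real"
  assumes "0 < \<sigma>" "\<sigma> \<le> 1" "0 \<le> K" "0 < \<delta>" "\<delta> \<le> 1"
    and hol: "\<And>x y. x \<in> {0..1} \<Longrightarrow> y \<in> {0..1} \<Longrightarrow> \<bar>h x - h y\<bar> \<le> K * \<bar>x - y\<bar> powr \<sigma>"
  shows "real (box_count \<delta> (graph_of {0..1} h)) \<le> 4*(K+1) * (\<delta>/2) powr (\<sigma>-2)"
proof -
  define w where "w = \<delta>/2"
  have w: "0 < w" "w \<le> 1" using assms by (auto simp: w_def)
  define cell where "cell = (\<lambda>(j::int, l::int).
    {real_of_int j * w..real_of_int j * w + w} \<times> {real_of_int l * w..real_of_int l * w + w})"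
  define J where "J = (\<lambda>x. (\<lfloor>x/w\<rfloor>, \<lfloor>h x/w\<rfloor>)) ` {0..1::real}"
  have "finite J" using card_graph_grid_cells(1)[OF assms(1,3) w(1) hol] by (simp add: J_def)
  have "graph_of {0..1} h \<subseteq> \<Union>(cell ` J)"
  proof
    fix p assume "p \<in> graph_of {0..1} h"
    then obtain x where "x \<in> {0..1}" "p = (x, h x)" by (auto simp: graph_of_def)
    then show "p \<in> \<Union>(cell ` J)"
      using floor_divide_mult_bounds[OF w(1), of x] floor_divide_mult_bounds[OF w(1), of "h x"]
      by (intro UN_I[of "(\<lfloor>x/w\<rfloor>, \<lfloor>h x/w\<rfloor>)"]) (auto simp: J_def cell_def)
  qed
  moreover have "bounded (cell c) \<and> diameter (cell c) \<le> \<delta>" for c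
    using square_diameter_le[of w] w(1) by (auto simp: cell_def w_def split: prod.split)
  ultimately have "box_count \<delta> (graph_of {0..1} h) \<le> card (cell ` J)"
    using \<open>finite J\<close> by (intro box_count_le_card) auto
  also have "\<dots> \<le> card J" using \<open>finite J\<close> by (rule card_image_le)
  finally have "real (box_count \<delta> (graph_of {0..1} h)) \<le> real (card J)" by simp
  also have "\<dots> \<le> (1/w + 1) * (2*K*w powr (\<sigma>-1) + 2)"
    using card_graph_grid_cells(2)[OF assms(1,3) w(1) hol] by (simp add: J_def)
  also have "\<dots> \<le> 4*(K+1) * w powr (\<sigma>-2)" using grid_count_estimate[OF w assms(3,1,2)] .
  finally show ?thesis by (simp add: w_def)
qed

lemma tendsto_divide_neg_ln_at_right_0:
  "((\<lambda>\<delta>. c / - ln \<delta> + a) \<longlongrightarrow> a) (at_right (0::real))"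
proof -
  have "filterlim (\<lambda>\<delta>. - ln \<delta>) at_top (at_right (0::real))"
    using ln_at_0 by (simp add: filterlim_uminus_at_bot)
  then have "((\<lambda>\<delta>. c / - ln \<delta> + a) \<longlongrightarrow> 0 + a) (at_right 0)"
    by (intro tendsto_add tendsto_const tendsto_divide_0[OF tendsto_const]
        filterlim_at_top_imp_at_infinity)
  then show ?thesis by (simp only: add_0_left)
qed

lemma upper_box_dim_holder_graph:
  assumes "holder_on \<sigma> {0..1} h" "0 < \<sigma>" "\<sigma> \<le> 1"
  shows "upper_box_dim (graph_of {0..1} h) \<le> ereal (2 - \<sigma>)"
proof -
  let ?G = "graph_of {0..1} h"
  obtain K where K: "0 \<le> K" "\<And>x y. x \<in> {0..1} \<Longrightarrow> y \<in> {0..1} \<Longrightarrow> \<bar>h x - h y\<bar> \<le> K * \<bar>x - y\<bar> powr \<sigma>"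
    using holder_onE[OF assms(1)] unfolding dist_real_def by metis
  have nonempty: "?G \<noteq> {}" by (auto simp: graph_of_def)
  have compact: "compact ?G"
    using compact_graph[OF holder_on_imp_continuous_on[OF assms(1,2)]] .
  define c where "c = 4*(K+1) * (1/2) powr (\<sigma>-2)"
  have "c > 0" using K(1) by (simp add: c_def)
  have "eventually (\<lambda>\<delta>. ereal (ln (real (box_count \<delta> ?G)) / - ln \<delta>)
      \<le> ereal (ln c / - ln \<delta> + (2 - \<sigma>))) (at_right 0)"
    using eventually_at_right_real[OF zero_less_one]
  proof (rule eventually_mono)
    fix \<delta> :: real assume \<delta>: "\<delta> \<in> {0<..<1}"
    have "real (box_count \<delta> ?G) \<le> 4*(K+1) * (\<delta>/2) powr (\<sigma>-2)"
      using holder_graph_box_count[OF assms(2,3) K(1) _ _ K(2)] \<delta> by simp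
    also have "\<dots> = c * \<delta> powr (\<sigma>-2)" using \<delta> by (simp add: c_def powr_divide)
    moreover have "0 < real (box_count \<delta> ?G)"
      using box_count_pos[OF compact nonempty, of \<delta>] \<delta> by simp
    ultimately have "ln (real (box_count \<delta> ?G)) \<le> ln (c * \<delta> powr (\<sigma>-2))"
      using \<open>c > 0\<close> by (subst ln_le_cancel_iff) auto
    also have "\<dots> = ln c + (\<sigma>-2) * ln \<delta>" using \<open>c > 0\<close> \<delta> by (simp add: ln_mult ln_powr)
    finally have "ln (real (box_count \<delta> ?G)) / - ln \<delta> \<le> (ln c + (\<sigma>-2) * ln \<delta>) / - ln \<delta>"
      using \<delta> by (intro divide_right_mono) auto
    also have "\<dots> = ln c / - ln \<delta> + (2 - \<sigma>)" using \<delta> by (simp add: field_simps)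
    finally show "ereal (ln (real (box_count \<delta> ?G)) / - ln \<delta>) \<le> ereal (ln c / - ln \<delta> + (2 - \<sigma>))"
      by simp
  qed
  then have "upper_box_dim ?G \<le> Limsup (at_right 0) (\<lambda>\<delta>. ereal (ln c / - ln \<delta> + (2 - \<sigma>)))"
    unfolding upper_box_dim_def by (rule Limsup_mono)
  also have "\<dots> = ereal (2 - \<sigma>)"
    by (intro lim_imp_Limsup tendsto_intros tendsto_divide_neg_ln_at_right_0) simp
  finally show ?thesis .
qed

lemma ennreal_half_le:
  assumes "1 \<le> 2 * x"
  shows "ennreal (1/2) \<le> x"
proof -
  have "ennreal (1/2) * 1 \<le> ennreal (1/2) * (2 * x)" using assms by (rule mult_left_mono) simp
  also have "\<dots> = (ennreal (1/2) * 2) * x" by (simp only: mult.assoc)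
  also have "ennreal (1/2) * 2 = 1" using ennreal_mult[of "1/2" 2] by simp
  finally show ?thesis by simp
qed

text \<open>
  Every set of the cover projects into an interval of length twice its diameter, and these
  intervals cover [0,1].
\<close>
lemma graph_cover_sum_diameter_powr_ge:
  fixes h :: "real \<Rightarrow> real" and C :: "nat \<Rightarrow> (real \<times> real) set"
  assumes cover: "graph_of {0..1} h \<subseteq> (\<Union>j. C j)"
    and small: "\<And>j. bounded (C j) \<and> diameter (C j) \<le> 1" and "0 < s" "s \<le> 1"
  shows "ennreal (1/2) \<le> (\<Sum>j. ennreal (diameter (C j) powr s))"
proof -
  define p where "p j = fst (SOME q. q \<in> C j)" for j
  define I where
    "I j = (if C j = {} then {} else {p j - diameter (C j) .. p j + diameter (C j)})" for j
  have cover_I: "{0..1} \<subseteq> (\<Union>j. I j)"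
  proof
    fix x :: real assume "x \<in> {0..1}"
    then obtain j where j: "(x, h x) \<in> C j" using cover by (auto simp: graph_of_def)
    then have q: "(SOME q. q \<in> C j) \<in> C j" by (rule someI)
    have "dist x (p j) \<le> dist (x, h x) (SOME q. q \<in> C j)"
      unfolding p_def using dist_fst_le[of "(x, h x)"] by simp
    also have "\<dots> \<le> diameter (C j)" using small j q by (intro diameter_bounded_bound) auto
    finally show "x \<in> (\<Union>j. I j)" using j by (auto simp: I_def dist_real_def abs_le_iff)
  qed
  have length_I: "emeasure lborel (I j) \<le> 2 * ennreal (diameter (C j) powr s)" for j
  proof (cases "C j = {}")
    case False
    have d: "0 \<le> diameter (C j)" "diameter (C j) \<le> 1" using small diameter_ge_0 by auto
    then have "diameter (C j) \<le> diameter (C j) powr s"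
      using powr_mono'[OF \<open>s \<le> 1\<close> d] by (cases "diameter (C j) = 0") auto
    then have "ennreal (2 * diameter (C j)) \<le> ennreal (2 * diameter (C j) powr s)"
      by (intro ennreal_leI) simp
    then show ?thesis using False d by (simp add: I_def ennreal_mult)
  qed (simp add: I_def)
  have measurable: "I j \<in> sets lborel" for j by (simp add: I_def)
  have "emeasure lborel {0..1::real} \<le> emeasure lborel (\<Union>j. I j)"
    using cover_I measurable by (intro emeasure_mono) auto
  also have "\<dots> \<le> (\<Sum>j. emeasure lborel (I j))"
    using measurable by (intro emeasure_subadditive_countably) auto
  also have "\<dots> \<le> (\<Sum>j. 2 * ennreal (diameter (C j) powr s))"
    using length_I by (rule suminf_le) auto
  finally show ?thesis by (intro ennreal_half_le) simp
qed

lemma one_le_hausdorff_dim_graph: "1 \<le> hausdorff_dim (graph_of {0..1} h)"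
  unfolding hausdorff_dim_def
proof (rule Inf_greatest, clarify)
  fix s :: real assume "0 < s" and null: "hausdorff_measure s (graph_of {0..1} h) = 0"
  show "1 \<le> ereal s"
  proof (rule ccontr)
    assume "\<not> 1 \<le> ereal s"
    then have "s \<le> 1" by simp
    have "ennreal (1/2) \<le> hausdorff_content s 1 (graph_of {0..1} h)"
      unfolding hausdorff_content_def
    proof (rule INF_greatest)
      fix C :: "nat \<Rightarrow> (real \<times> real) set"
      assume "C \<in> {C. graph_of {0..1} h \<subseteq> (\<Union>j. C j) \<and> (\<forall>j. bounded (C j) \<and> diameter (C j) \<le> 1)}"
      then show "ennreal (1/2) \<le> (\<Sum>j. ennreal (diameter (C j) powr s))"
        using \<open>0 < s\<close> \<open>s \<le> 1\<close> by (intro graph_cover_sum_diameter_powr_ge) auto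
    qed
    also have "\<dots> \<le> hausdorff_measure s (graph_of {0..1} h)"
      unfolding hausdorff_measure_def by (intro SUP_upper) auto
    finally show False using null by simp
  qed
qed

section \<open>Hoelder continuity from a self-referential contraction\<close>

lemma le_if_le_add_mult_power:
  fixes a b c q :: real
  assumes "\<And>n. a \<le> b + c * q ^ n" "0 \<le> q" "q < 1"
  shows "a \<le> b"
proof -
  have "(\<lambda>n. b + c * q ^ n) \<longlonglongrightarrow> b + c * 0"
    using assms by (intro tendsto_intros) auto
  then show ?thesis using assms(1) by (intro LIMSEQ_le_const) auto
qed

text \<open>
  The restriction of an \<alpha>-fractal function to a coordinate axis, abstracted: \<phi> i rescales
  the i-th piece {p (i - 1)..p i} onto [0,1].
\<close>
locale self_referential_bound =
  fixes g :: "real \<Rightarrow> real" and p :: "nat \<Rightarrow> real" and m :: nat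
    and \<phi> :: "nat \<Rightarrow> real \<Rightarrow> real" and A \<sigma> C \<beta> :: real
  assumes bounded_g: "bounded (g ` {0..1})"
    and exponent: "0 < \<sigma>" "\<sigma> \<le> 1"
    and partition: "p 0 = 0" "p m = 1" "1 \<le> m"
    and A_pos: "0 < A"
    and piece_length: "\<And>i. 1 \<le> i \<Longrightarrow> i \<le> m \<Longrightarrow> A \<le> p i - p (i - 1)"
    and maps_into: "\<And>i x. 1 \<le> i \<Longrightarrow> i \<le> m \<Longrightarrow> x \<in> {p (i - 1)..p i} \<Longrightarrow> \<phi> i x \<in> {0..1}"
    and maps_ends: "\<And>i. 1 \<le> i \<Longrightarrow> i \<le> m \<Longrightarrow> \<phi> i (p (i - 1)) \<in> {0, 1} \<and> \<phi> i (p i) \<in> {0, 1}"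
    and expands: "\<And>i x y. 1 \<le> i \<Longrightarrow> i \<le> m \<Longrightarrow> x \<in> {p (i - 1)..p i} \<Longrightarrow> y \<in> {p (i - 1)..p i} \<Longrightarrow>
      \<bar>\<phi> i x - \<phi> i y\<bar> \<le> \<bar>x - y\<bar> / A"
    and C_nonneg: "0 \<le> C"
    and \<beta>: "0 \<le> \<beta>" "\<beta> < A powr \<sigma>"
    and contraction: "\<And>i x y. 1 \<le> i \<Longrightarrow> i \<le> m \<Longrightarrow> x \<in> {p (i - 1)..p i} \<Longrightarrow> y \<in> {p (i - 1)..p i} \<Longrightarrow>
      \<bar>g x - g y\<bar> \<le> C * \<bar>x - y\<bar> powr \<sigma> + \<beta> * \<bar>g (\<phi> i x) - g (\<phi> i y)\<bar>"
begin

definition B :: real where "B = sup_norm_on {0..1} g"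

definition \<rho> :: real where "\<rho> = \<beta> / A powr \<sigma>"

lemma g_le_B: "x \<in> {0..1} \<Longrightarrow> \<bar>g x\<bar> \<le> B"
  unfolding B_def using bounded_g by (rule abs_le_sup_norm_on)

lemma B_nonneg: "0 \<le> B"
  using g_le_B[of 0] by simp

lemma p_mono: "i \<le> j \<Longrightarrow> j \<le> m \<Longrightarrow> p i \<le> p j"
proof (induction j)
  case (Suc j)
  then show ?case using piece_length[of "Suc j"] A_pos by (cases "i = Suc j") auto
qed simp

lemma A_le_1: "A \<le> 1"
  using piece_length[of 1] p_mono[of 1 m] partition by auto

lemma \<rho>_bounds: "0 \<le> \<rho>" "\<rho> < 1"
  using \<beta> A_pos by (auto simp: \<rho>_def)

lemma \<beta>_less_1: "\<beta> < 1"
  using \<beta> powr_le1[of \<sigma> A] exponent A_pos A_le_1 by linarith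

lemma piece_cover:
  assumes "x \<in> {0..1}"
  obtains i where "1 \<le> i" "i \<le> m" "x \<in> {p (i - 1)..p i}"
proof (cases "x = 0")
  case True
  then show ?thesis using that[of 1] partition p_mono[of 0 1] by auto
next
  case False
  define i where "i = (LEAST i. x \<le> p i)"
  have "x \<le> p m" using assms partition by simp
  then have "x \<le> p i" "i \<le> m" unfolding i_def by (auto intro: LeastI Least_le)
  moreover have "1 \<le> i" using \<open>x \<le> p i\<close> False assms partition by (cases i) auto
  moreover have "\<not> x \<le> p (i - 1)"
    unfolding i_def using \<open>1 \<le> i\<close> by (intro not_less_Least) (auto simp: i_def)
  ultimately show ?thesis using that by auto
qed

lemma contraction_step:
  assumes i: "1 \<le> i" "i \<le> m" and x: "x \<in> {p (i - 1)..p i}" and y: "y \<in> {p (i - 1)..p i}"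
    and "0 \<le> K" and image_bound: "\<bar>g (\<phi> i x) - g (\<phi> i y)\<bar> \<le> K * \<bar>\<phi> i x - \<phi> i y\<bar> powr \<sigma> + E"
  shows "\<bar>g x - g y\<bar> \<le> (C + \<rho> * K) * \<bar>x - y\<bar> powr \<sigma> + \<beta> * E"
proof -
  have "\<bar>\<phi> i x - \<phi> i y\<bar> powr \<sigma> \<le> (\<bar>x - y\<bar> / A) powr \<sigma>"
    using expands[OF i x y] exponent by (intro powr_mono2) auto
  also have "\<dots> = \<bar>x - y\<bar> powr \<sigma> / A powr \<sigma>" using A_pos by (simp add: powr_divide)
  finally have "\<bar>g (\<phi> i x) - g (\<phi> i y)\<bar> \<le> K * (\<bar>x - y\<bar> powr \<sigma> / A powr \<sigma>) + E"
    using image_bound \<open>0 \<le> K\<close> by (meson add_right_mono mult_left_mono order_trans)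
  then have "\<beta> * \<bar>g (\<phi> i x) - g (\<phi> i y)\<bar> \<le> \<beta> * (K * (\<bar>x - y\<bar> powr \<sigma> / A powr \<sigma>) + E)"
    using \<beta> by (intro mult_left_mono) auto
  also have "\<dots> = \<rho> * K * \<bar>x - y\<bar> powr \<sigma> + \<beta> * E" by (simp add: \<rho>_def algebra_simps)
  finally show ?thesis using contraction[OF i x y] by (simp add: algebra_simps)
qed

lemma far_bound:
  assumes "x \<in> {0..1}" "y \<in> {0..1}" "A \<le> \<bar>x - y\<bar>" "2 * B / A powr \<sigma> \<le> K"
  shows "\<bar>g x - g y\<bar> \<le> K * \<bar>x - y\<bar> powr \<sigma>"
proof -
  have "\<bar>g x - g y\<bar> \<le> 2 * B" using g_le_B[OF assms(1)] g_le_B[OF assms(2)] by linarith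
  also have "\<dots> = 2 * B / A powr \<sigma> * A powr \<sigma>" using A_pos by simp
  also have "\<dots> \<le> K * \<bar>x - y\<bar> powr \<sigma>"
    using assms(3,4) A_pos B_nonneg exponent
    by (intro mult_mono powr_mono2) (auto intro: order_trans[rotated])
  finally show ?thesis .
qed

lemma contraction_constant: "C / (1 - \<rho>) \<le> K \<Longrightarrow> C + \<rho> * K \<le> K"
  using \<rho>_bounds by (simp add: divide_le_eq algebra_simps)

text \<open>After n reduction steps only \<beta>^n times the trivial bound 2 B remains.\<close>
lemma bound_with_geometric_error:
  assumes R: "\<And>x y. R x y \<Longrightarrow> x \<in> {0..1} \<and> y \<in> {0..1}"
    and K: "2 * B / A powr \<sigma> \<le> K" "C / (1 - \<rho>) \<le> K"
    and reduce: "\<And>x y. R x y \<Longrightarrow> \<bar>x - y\<bar> < A \<Longrightarrow> \<bar>g x - g y\<bar> \<le> K * \<bar>x - y\<bar> powr \<sigma> \<or>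
      (\<exists>i. 1 \<le> i \<and> i \<le> m \<and> x \<in> {p (i - 1)..p i} \<and> y \<in> {p (i - 1)..p i} \<and> R (\<phi> i x) (\<phi> i y))"
    and "R x y"
  shows "\<bar>g x - g y\<bar> \<le> K * \<bar>x - y\<bar> powr \<sigma> + 2 * B * \<beta> ^ n"
proof -
  have "0 \<le> 2 * B / A powr \<sigma>" using B_nonneg by simp
  then have "0 \<le> K" using K(1) by linarith
  show ?thesis
    using \<open>R x y\<close>
  proof (induction n arbitrary: x y)
    case 0
    then have "x \<in> {0..1}" "y \<in> {0..1}" using R by auto
    then have "\<bar>g x - g y\<bar> \<le> 2 * B" using g_le_B[of x] g_le_B[of y] by linarith
    moreover have "0 \<le> K * \<bar>x - y\<bar> powr \<sigma>" using \<open>0 \<le> K\<close> by simp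
    ultimately show ?case by simp
  next
    case (Suc n)
    have error_nonneg: "0 \<le> 2 * B * \<beta> ^ Suc n" using B_nonneg \<beta> by simp
    show ?case
    proof (cases "A \<le> \<bar>x - y\<bar>")
      case True
      then have "\<bar>g x - g y\<bar> \<le> K * \<bar>x - y\<bar> powr \<sigma>"
        using far_bound K(1) R[OF Suc.prems] by blast
      then show ?thesis using error_nonneg by linarith
    next
      case False
      then have "\<bar>g x - g y\<bar> \<le> K * \<bar>x - y\<bar> powr \<sigma> \<or>
        (\<exists>i. 1 \<le> i \<and> i \<le> m \<and> x \<in> {p (i - 1)..p i} \<and> y \<in> {p (i - 1)..p i} \<and> R (\<phi> i x) (\<phi> i y))"
        using reduce[OF Suc.prems] by simp
      then show ?thesis
      proof (elim disjE exE conjE)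
        assume "\<bar>g x - g y\<bar> \<le> K * \<bar>x - y\<bar> powr \<sigma>"
        then show ?thesis using error_nonneg by linarith
      next
        fix i assume i: "1 \<le> i" "i \<le> m" "x \<in> {p (i - 1)..p i}" "y \<in> {p (i - 1)..p i}"
          and "R (\<phi> i x) (\<phi> i y)"
        then have "\<bar>g x - g y\<bar> \<le> (C + \<rho> * K) * \<bar>x - y\<bar> powr \<sigma> + \<beta> * (2 * B * \<beta> ^ n)"
          using \<open>0 \<le> K\<close> Suc.IH by (intro contraction_step)
        also have "\<dots> \<le> K * \<bar>x - y\<bar> powr \<sigma> + 2 * B * \<beta> ^ Suc n"
          using mult_right_mono[OF contraction_constant[OF K(2)], of "\<bar>x - y\<bar> powr \<sigma>"]
          by (simp add: algebra_simps)
        finally show ?thesis .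
      qed
    qed
  qed
qed

lemma bound_by_iteration:
  assumes R: "\<And>x y. R x y \<Longrightarrow> x \<in> {0..1} \<and> y \<in> {0..1}"
    and K: "2 * B / A powr \<sigma> \<le> K" "C / (1 - \<rho>) \<le> K"
    and reduce: "\<And>x y. R x y \<Longrightarrow> \<bar>x - y\<bar> < A \<Longrightarrow> \<bar>g x - g y\<bar> \<le> K * \<bar>x - y\<bar> powr \<sigma> \<or>
      (\<exists>i. 1 \<le> i \<and> i \<le> m \<and> x \<in> {p (i - 1)..p i} \<and> y \<in> {p (i - 1)..p i} \<and> R (\<phi> i x) (\<phi> i y))"
    and "R x y"
  shows "\<bar>g x - g y\<bar> \<le> K * \<bar>x - y\<bar> powr \<sigma>"
  using le_if_le_add_mult_power[OF bound_with_geometric_error[OF assms] \<beta>(1) \<beta>_less_1] .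

text \<open>
  A pair straddling a breakpoint is reduced by no single \<phi> i.  It is split at the breakpoint,
  which \<phi> i maps to 0 or 1, so pairs with one point in {0, 1} are treated first.
\<close>
definition K_ends :: real where "K_ends = max (C / (1 - \<rho>)) (2 * B / A powr \<sigma>)"

lemma endpoint_bound:
  assumes "x \<in> {0..1}" "e \<in> {0, 1}"
  shows "\<bar>g x - g e\<bar> \<le> K_ends * \<bar>x - e\<bar> powr \<sigma>"
proof (rule bound_by_iteration[where R = "\<lambda>x e. x \<in> {0..1} \<and> e \<in> {0, 1}"])
  fix x e assume xe: "x \<in> {0..1} \<and> e \<in> {0, 1}" and near: "\<bar>x - e\<bar> < A"
  obtain i where i: "1 \<le> i" "i \<le> m" "x \<in> {p (i - 1)..p i}" "e = p (i - 1) \<or> e = p i"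
  proof (cases "e = 0")
    case True
    then show ?thesis
      using that[of 1] xe near partition piece_length[of 1] by auto
  next
    case False
    then show ?thesis
      using that[of m] xe near partition piece_length[of m] by auto
  qed
  moreover have "p (i - 1) \<le> p i" using p_mono i by simp
  ultimately show "\<bar>g x - g e\<bar> \<le> K_ends * \<bar>x - e\<bar> powr \<sigma> \<or>
      (\<exists>i. 1 \<le> i \<and> i \<le> m \<and> x \<in> {p (i - 1)..p i} \<and> e \<in> {p (i - 1)..p i} \<and>
        \<phi> i x \<in> {0..1} \<and> \<phi> i e \<in> {0, 1})"
    using maps_into[OF i(1-3)] maps_ends[OF i(1,2)] by auto
qed (use assms in \<open>auto simp: K_ends_def\<close>)

lemma K_ends_nonneg: "0 \<le> K_ends"
  using B_nonneg by (simp add: K_ends_def max.coboundedI2)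

lemma breakpoint_bound:
  assumes i: "1 \<le> i" "i \<le> m" and x: "x \<in> {p (i - 1)..p i}" and z: "z = p (i - 1) \<or> z = p i"
  shows "\<bar>g x - g z\<bar> \<le> (C + \<rho> * K_ends) * \<bar>x - z\<bar> powr \<sigma>"
proof -
  have z_piece: "z \<in> {p (i - 1)..p i}" using z p_mono[of "i - 1" i] i by auto
  have "\<bar>g (\<phi> i x) - g (\<phi> i z)\<bar> \<le> K_ends * \<bar>\<phi> i x - \<phi> i z\<bar> powr \<sigma> + 0"
    using endpoint_bound maps_into[OF i x] maps_ends[OF i] z by auto
  then show ?thesis using contraction_step[OF i x z_piece K_ends_nonneg, of 0] by simp
qed

lemma nearby_pair:
  assumes "x \<in> {0..1}" "y \<in> {0..1}" "x \<le> y" "y - x < A"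
  shows "\<bar>g x - g y\<bar> \<le> 2 * (C + \<rho> * K_ends) * \<bar>x - y\<bar> powr \<sigma> \<or>
    (\<exists>i. 1 \<le> i \<and> i \<le> m \<and> x \<in> {p (i - 1)..p i} \<and> y \<in> {p (i - 1)..p i})"
proof -
  obtain i where i: "1 \<le> i" "i \<le> m" "x \<in> {p (i - 1)..p i}"
    using piece_cover[OF assms(1)] by blast
  show ?thesis
  proof (cases "y \<le> p i")
    case True
    then show ?thesis using i assms(3) by auto
  next
    case False
    then have "i < m" using assms(2) partition i(2) by (cases "i = m") auto
    then have i': "1 \<le> i + 1" "i + 1 \<le> m" "y \<in> {p (i + 1 - 1)..p (i + 1)}"
      using False assms(3,4) i(3) piece_length[of "i + 1"] by auto
    have "\<bar>x - p i\<bar> powr \<sigma> \<le> \<bar>x - y\<bar> powr \<sigma>" "\<bar>y - p i\<bar> powr \<sigma> \<le> \<bar>x - y\<bar> powr \<sigma>"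
      using False assms(3) i(3) exponent by (auto intro!: powr_mono2)
    moreover have "0 \<le> C + \<rho> * K_ends" using C_nonneg \<rho>_bounds K_ends_nonneg by simp
    ultimately have "(C + \<rho> * K_ends) * \<bar>x - p i\<bar> powr \<sigma> \<le> (C + \<rho> * K_ends) * \<bar>x - y\<bar> powr \<sigma>"
        "(C + \<rho> * K_ends) * \<bar>y - p i\<bar> powr \<sigma> \<le> (C + \<rho> * K_ends) * \<bar>x - y\<bar> powr \<sigma>"
      by (auto intro: mult_left_mono)
    moreover have "\<bar>g x - g (p i)\<bar> \<le> (C + \<rho> * K_ends) * \<bar>x - p i\<bar> powr \<sigma>"
      using breakpoint_bound[OF i, of "p i"] by simp
    moreover have "\<bar>g y - g (p i)\<bar> \<le> (C + \<rho> * K_ends) * \<bar>y - p i\<bar> powr \<sigma>"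
      using breakpoint_bound[OF i', of "p i"] by simp
    ultimately have "\<bar>g x - g y\<bar>
        \<le> (C + \<rho> * K_ends) * \<bar>x - y\<bar> powr \<sigma> + (C + \<rho> * K_ends) * \<bar>x - y\<bar> powr \<sigma>"
      by linarith
    then have "\<bar>g x - g y\<bar> \<le> 2 * (C + \<rho> * K_ends) * \<bar>x - y\<bar> powr \<sigma>"
      by (simp only: mult_2 distrib_right)
    then show ?thesis ..
  qed
qed

definition K_holder :: real
  where "K_holder = max (C / (1 - \<rho>)) (max (2 * (C + \<rho> * K_ends)) (2 * B / A powr \<sigma>))"

lemma holder_bound:
  assumes "x \<in> {0..1}" "y \<in> {0..1}"
  shows "\<bar>g x - g y\<bar> \<le> K_holder * \<bar>x - y\<bar> powr \<sigma>"
proof (rule bound_by_iteration[where R = "\<lambda>x y. x \<in> {0..1} \<and> y \<in> {0..1}"])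
  have enough: "2 * (C + \<rho> * K_ends) * \<bar>x - y\<bar> powr \<sigma> \<le> K_holder * \<bar>x - y\<bar> powr \<sigma>" for x y
    by (intro mult_right_mono) (auto simp: K_holder_def)
  fix x y assume xy: "x \<in> {0..1} \<and> y \<in> {0..1}" and near: "\<bar>x - y\<bar> < A"
  consider "x \<le> y" | "y \<le> x" by linarith
  then show "\<bar>g x - g y\<bar> \<le> K_holder * \<bar>x - y\<bar> powr \<sigma> \<or>
      (\<exists>i. 1 \<le> i \<and> i \<le> m \<and> x \<in> {p (i - 1)..p i} \<and> y \<in> {p (i - 1)..p i} \<and>
        \<phi> i x \<in> {0..1} \<and> \<phi> i y \<in> {0..1})"
  proof cases
    case 1
    then show ?thesis
      using nearby_pair[of x y] xy near enough[of x y] maps_into by (smt (verit))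
  next
    case 2
    then show ?thesis
      using nearby_pair[of y x] xy near enough[of y x] maps_into by (smt (verit) abs_minus_commute)
  qed
qed (use assms in \<open>auto simp: K_holder_def\<close>)

lemma holder: "holder_on \<sigma> {0..1} g"
  unfolding holder_on_def dist_real_def using holder_bound by blast

end

section \<open>The affine setting\<close>

lemma dist_axis: "dist (axis k x) (axis k y) = dist x (y::real)"
proof -
  have "axis k x - axis k y = (x - y) *\<^sub>R axis k (1::real)" by (simp add: axis_def vec_eq_iff)
  then show ?thesis by (simp add: dist_norm)
qed

lemma One_vec_nth: "(One :: real^'n) $ i = 1"
  by (subst cart_eq_inner_axis) (simp add: inner_sum_Basis)

lemma axis_in_unit_cube: "x \<in> {0..1} \<Longrightarrow> axis k x \<in> unit_cube"
  unfolding unit_cube_def mem_box_cart One_vec_nth by (simp add: axis_def)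

lemma bounded_on_unit_cube:
  "continuous_on unit_cube h \<Longrightarrow> bounded (h ` unit_cube)"
  unfolding unit_cube_def by (intro compact_imp_bounded compact_continuous_image) auto

lemma valid_partition_step:
  "valid_partition M xp \<Longrightarrow> 1 \<le> i \<Longrightarrow> i \<le> M k \<Longrightarrow> xp k (i - 1) < xp k i"
  by (simp add: valid_partition_def)

lemma valid_partition_ends:
  assumes "valid_partition M xp"
  shows "2 \<le> M k" "xp k 0 = 0" "xp k (M k) = 1"
  using assms by (auto simp: valid_partition_def)

lemma valid_partition_mono:
  assumes "valid_partition M xp" "i \<le> j" "j \<le> M k"
  shows "xp k i \<le> xp k j"
  using assms(2,3)
proof (induction j)
  case (Suc j)
  then show ?case using valid_partition_step[OF assms(1), of "Suc j" k] by (cases "i = Suc j") auto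
qed simp

lemma abs_aff_a:
  assumes "valid_partition M xp" "1 \<le> i" "i \<le> M k"
  shows "\<bar>aff_a xp k i\<bar> = xp k i - xp k (i - 1)"
  using valid_partition_step[OF assms] by (auto simp: aff_a_def)

lemma a_min_bounds:
  fixes M :: "'q::finite \<Rightarrow> nat"
  assumes "valid_partition M xp"
  shows "0 < a_min M xp" "1 \<le> i \<Longrightarrow> i \<le> M k \<Longrightarrow> a_min M xp \<le> \<bar>aff_a xp k i\<bar>"
proof -
  let ?S = "{\<bar>aff_a xp k i\<bar> | k i. 1 \<le> i \<and> i \<le> M k}"
  have "?S \<subseteq> (\<Union>k. (\<lambda>i. \<bar>aff_a xp k i\<bar>) ` {1..M k})" by fastforce
  then have "finite ?S" by (rule finite_subset) auto
  moreover have "\<bar>aff_a xp k 1\<bar> \<in> ?S" for k using assms by (force simp: valid_partition_def)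
  ultimately have "Min ?S \<in> ?S" by (intro Min_in) blast+
  then show "0 < a_min M xp"
    unfolding a_min_def using abs_aff_a[OF assms] valid_partition_step[OF assms] by force
  show "1 \<le> i \<Longrightarrow> i \<le> M k \<Longrightarrow> a_min M xp \<le> \<bar>aff_a xp k i\<bar>"
    unfolding a_min_def using \<open>finite ?S\<close> by (intro Min_le) auto
qed

definition u_inv_coord :: "('q \<Rightarrow> nat \<Rightarrow> real) \<Rightarrow> 'q \<Rightarrow> nat \<Rightarrow> real \<Rightarrow> real" where
  "u_inv_coord xp k i x = (x - aff_b xp k i) / aff_a xp k i"

lemma u_inv_coord_in_unit_interval:
  assumes "valid_partition M xp" "1 \<le> i" "i \<le> M k" "x \<in> {xp k (i - 1)..xp k i}"
  shows "u_inv_coord xp k i x \<in> {0..1}"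
  using valid_partition_step[OF assms(1-3)] assms(4)
  by (cases "odd i") (auto simp: u_inv_coord_def aff_a_def aff_b_def divide_le_eq_1 field_simps)

lemma u_inv_coord_endpoints:
  assumes "valid_partition M xp" "1 \<le> i" "i \<le> M k"
  shows "u_inv_coord xp k i (xp k (i - 1)) \<in> {0, 1}" "u_inv_coord xp k i (xp k i) \<in> {0, 1}"
  using valid_partition_step[OF assms] by (auto simp: u_inv_coord_def aff_a_def aff_b_def)

lemma abs_u_inv_coord_diff:
  "\<bar>u_inv_coord xp k i x - u_inv_coord xp k i y\<bar> = \<bar>x - y\<bar> / \<bar>aff_a xp k i\<bar>"
  by (simp add: u_inv_coord_def diff_divide_distrib[symmetric])

lemma alpha_fractal_on_axis:
  assumes part: "valid_partition M xp" and frac: "is_alpha_fractal M xp f \<alpha> s F"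
    and i: "1 \<le> i" "i \<le> M k" and x: "x \<in> {xp k (i - 1)..xp k i}"
  shows "F (axis k x) = f (axis k x) + \<alpha> (axis k x) *
    (F (axis k (u_inv_coord xp k i x)) - s (axis k (u_inv_coord xp k i x)))"
proof -
  define I where "I j = (if j = k then i else 1)" for j
  have M: "2 \<le> M j" and xp0: "xp j 0 = 0" for j using valid_partition_ends[OF part] by auto
  have xp1: "xp j 0 < xp j 1" for j using valid_partition_step[OF part, of 1 j] M[of j] by simp
  have "1 \<le> I j \<and> I j \<le> M j" for j using i M[of j] by (simp add: I_def)
  moreover have "xp j (I j - 1) \<le> axis k x $ j \<and> axis k x $ j \<le> xp j (I j)" for j
    using x xp0[of j] xp1[of j] by (simp add: I_def axis_def)
  moreover have "u_inv xp I (axis k x) = axis k (u_inv_coord xp k i x)"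
    using xp0 by (auto simp: u_inv_def u_inv_coord_def vec_eq_iff I_def axis_def aff_b_def)
  ultimately show ?thesis using frac unfolding is_alpha_fractal_def by metis
qed

lemma abs_diff_self_referential:
  fixes gx gy fx fy ax ay gu gv su sv :: real
  assumes "gx = fx + ax * (gu - su)" "gy = fy + ay * (gv - sv)"
  shows "\<bar>gx - gy\<bar> \<le> \<bar>fx - fy\<bar> + \<bar>ax - ay\<bar> * \<bar>gu - su\<bar> + \<bar>ay\<bar> * (\<bar>gu - gv\<bar> + \<bar>su - sv\<bar>)"
proof -
  have "gx - gy = (fx - fy) + (ax - ay) * (gu - su) + ay * ((gu - gv) - (su - sv))"
    using assms by (simp add: algebra_simps)
  also have "\<bar>\<dots>\<bar> \<le> \<bar>fx - fy\<bar> + \<bar>ax - ay\<bar> * \<bar>gu - su\<bar> + \<bar>ay\<bar> * \<bar>(gu - gv) - (su - sv)\<bar>"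
    by (simp add: abs_mult[symmetric] abs_triangle_ineq order_trans[OF abs_triangle_ineq add_mono])
  also have "\<dots> \<le> \<bar>fx - fy\<bar> + \<bar>ax - ay\<bar> * \<bar>gu - su\<bar> + \<bar>ay\<bar> * (\<bar>gu - gv\<bar> + \<bar>su - sv\<bar>)"
    by (intro add_left_mono mult_left_mono abs_triangle_ineq4) simp
  finally show ?thesis .
qed

locale alpha_fractal_axis =
  fixes M :: "'q::finite \<Rightarrow> nat" and xp :: "'q \<Rightarrow> nat \<Rightarrow> real"
    and f \<alpha> s F :: "real^'q \<Rightarrow> real" and \<sigma> :: real and k :: 'q
  assumes part: "valid_partition M xp"
    and sig: "0 < \<sigma>" "\<sigma> \<le> 1"
    and hf: "holder_on \<sigma> unit_cube f"
    and ha: "holder_on \<sigma> unit_cube \<alpha>"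
    and hs: "holder_on \<sigma> unit_cube s"
    and small: "sup_norm_on unit_cube \<alpha> / a_min M xp powr \<sigma> < 1"
    and frac: "is_alpha_fractal M xp f \<alpha> s F"
begin

definition g :: "real \<Rightarrow> real" where "g x = F (axis k x)"

abbreviation A :: real where "A \<equiv> a_min M xp"

abbreviation \<beta> :: real where "\<beta> \<equiv> sup_norm_on unit_cube \<alpha>"

definition C :: real where
  "C = holder_seminorm \<sigma> unit_cube f
     + holder_seminorm \<sigma> unit_cube \<alpha> * (sup_norm_on unit_cube F + sup_norm_on unit_cube s)
     + \<beta> * holder_seminorm \<sigma> unit_cube s / A powr \<sigma>"

lemma holder_on_axis:
  fixes h :: "real^'q \<Rightarrow> real"
  assumes "holder_on \<sigma> unit_cube h" "x \<in> {0..1}" "y \<in> {0..1}"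
  shows "\<bar>h (axis k x) - h (axis k y)\<bar> \<le> holder_seminorm \<sigma> unit_cube h * \<bar>x - y\<bar> powr \<sigma>"
  using abs_diff_le_holder_seminorm[OF assms(1) axis_in_unit_cube[OF assms(2), of k]
      axis_in_unit_cube[OF assms(3), of k]]
  by (simp add: dist_axis dist_real_def)

lemma abs_le_sup_norm_on_cube:
  fixes h :: "real^'q \<Rightarrow> real"
  assumes "continuous_on unit_cube h" "v \<in> unit_cube"
  shows "\<bar>h v\<bar> \<le> sup_norm_on unit_cube h"
  using bounded_on_unit_cube[OF assms(1)] assms(2) by (rule abs_le_sup_norm_on)

lemma continuous_on_F: "continuous_on unit_cube F"
  using frac by (simp add: is_alpha_fractal_def)

lemma continuous_on_\<alpha>: "continuous_on unit_cube \<alpha>"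
  using holder_on_imp_continuous_on[OF ha sig(1)] .

lemma continuous_on_s: "continuous_on unit_cube s"
  using holder_on_imp_continuous_on[OF hs sig(1)] .

lemma holder_seminorm_cube_nonneg:
  fixes h :: "real^'q \<Rightarrow> real"
  assumes "holder_on \<sigma> unit_cube h"
  shows "0 \<le> holder_seminorm \<sigma> unit_cube h"
  using assms axis_in_unit_cube[of 0 k] axis_in_unit_cube[of 1 k]
  by (intro holder_seminorm_nonneg[of _ _ _ "axis k 0" "axis k 1"]) (auto simp: axis_eq_axis)

lemma sup_norm_cube_nonneg:
  fixes h :: "real^'q \<Rightarrow> real"
  assumes "continuous_on unit_cube h"
  shows "0 \<le> sup_norm_on unit_cube h"
  using abs_le_sup_norm_on_cube[OF assms axis_in_unit_cube[of 0 k]] by simp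

lemma C_nonneg: "0 \<le> C"
  using holder_seminorm_cube_nonneg[OF hf] holder_seminorm_cube_nonneg[OF ha]
    holder_seminorm_cube_nonneg[OF hs] sup_norm_cube_nonneg[OF continuous_on_F]
    sup_norm_cube_nonneg[OF continuous_on_s] sup_norm_cube_nonneg[OF continuous_on_\<alpha>]
  by (simp add: C_def)

lemma \<beta>_bounds: "0 \<le> \<beta>" "\<beta> < A powr \<sigma>"
  using sup_norm_cube_nonneg[OF continuous_on_\<alpha>] small a_min_bounds(1)[OF part]
  by (auto simp: divide_less_eq)

lemma piece_subset:
  "1 \<le> i \<Longrightarrow> i \<le> M k \<Longrightarrow> {xp k (i - 1)..xp k i} \<subseteq> {0..1}"
  using valid_partition_mono[OF part, of 0 "i - 1" k] valid_partition_mono[OF part, of i "M k" k]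
    valid_partition_ends[OF part, of k] by auto

lemma u_inv_coord_expands:
  assumes "1 \<le> i" "i \<le> M k"
  shows "\<bar>u_inv_coord xp k i x - u_inv_coord xp k i y\<bar> \<le> \<bar>x - y\<bar> / A"
  using abs_u_inv_coord_diff[of xp k i x y] a_min_bounds(2)[OF part assms] a_min_bounds(1)[OF part]
  by (simp add: divide_left_mono)

lemma g_contraction:
  assumes i: "1 \<le> i" "i \<le> M k"
    and x: "x \<in> {xp k (i - 1)..xp k i}" and y: "y \<in> {xp k (i - 1)..xp k i}"
  shows "\<bar>g x - g y\<bar>
    \<le> C * \<bar>x - y\<bar> powr \<sigma> + \<beta> * \<bar>g (u_inv_coord xp k i x) - g (u_inv_coord xp k i y)\<bar>"
proof -
  define u v where "u = u_inv_coord xp k i x" and "v = u_inv_coord xp k i y"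
  define d where "d = \<bar>x - y\<bar> powr \<sigma>"
  have xy: "x \<in> {0..1}" "y \<in> {0..1}" using piece_subset[OF i] x y by auto
  have uv: "u \<in> {0..1}" "v \<in> {0..1}"
    using u_inv_coord_in_unit_interval[OF part i] x y by (auto simp: u_def v_def)
  have "\<bar>u - v\<bar> powr \<sigma> \<le> (\<bar>x - y\<bar> / A) powr \<sigma>"
    using u_inv_coord_expands[OF i] sig by (auto simp: u_def v_def intro: powr_mono2)
  then have uv_dist: "\<bar>u - v\<bar> powr \<sigma> \<le> d / A powr \<sigma>"
    using a_min_bounds(1)[OF part] by (simp add: d_def powr_divide)
  have "\<bar>g x - g y\<bar> \<le> \<bar>f (axis k x) - f (axis k y)\<bar>
      + \<bar>\<alpha> (axis k x) - \<alpha> (axis k y)\<bar> * \<bar>g u - s (axis k u)\<bar>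
      + \<bar>\<alpha> (axis k y)\<bar> * (\<bar>g u - g v\<bar> + \<bar>s (axis k u) - s (axis k v)\<bar>)"
    using alpha_fractal_on_axis[OF part frac i x] alpha_fractal_on_axis[OF part frac i y]
    unfolding g_def u_def v_def by (rule abs_diff_self_referential)
  also have "\<dots> \<le> holder_seminorm \<sigma> unit_cube f * d
      + (holder_seminorm \<sigma> unit_cube \<alpha> * d) * (sup_norm_on unit_cube F + sup_norm_on unit_cube s)
      + \<beta> * (\<bar>g u - g v\<bar> + holder_seminorm \<sigma> unit_cube s * (d / A powr \<sigma>))"
  proof (intro add_mono mult_mono)
    show "\<bar>f (axis k x) - f (axis k y)\<bar> \<le> holder_seminorm \<sigma> unit_cube f * d"
      using holder_on_axis[OF hf xy] by (simp add: d_def)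
    show "\<bar>\<alpha> (axis k x) - \<alpha> (axis k y)\<bar> \<le> holder_seminorm \<sigma> unit_cube \<alpha> * d"
      using holder_on_axis[OF ha xy] by (simp add: d_def)
    show "\<bar>g u - s (axis k u)\<bar> \<le> sup_norm_on unit_cube F + sup_norm_on unit_cube s"
      using abs_le_sup_norm_on_cube[OF continuous_on_F axis_in_unit_cube[OF uv(1), of k]]
        abs_le_sup_norm_on_cube[OF continuous_on_s axis_in_unit_cube[OF uv(1), of k]]
      unfolding g_def by linarith
    show "\<bar>\<alpha> (axis k y)\<bar> \<le> \<beta>"
      using abs_le_sup_norm_on_cube[OF continuous_on_\<alpha> axis_in_unit_cube[OF xy(2), of k]] .
    show "\<bar>s (axis k u) - s (axis k v)\<bar> \<le> holder_seminorm \<sigma> unit_cube s * (d / A powr \<sigma>)"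
      using holder_on_axis[OF hs uv] uv_dist holder_seminorm_cube_nonneg[OF hs]
      by (meson mult_left_mono order_trans)
  qed (use holder_seminorm_cube_nonneg[OF ha] \<beta>_bounds(1) in \<open>auto simp: d_def\<close>)
  also have "\<dots> = C * d + \<beta> * \<bar>g u - g v\<bar>" by (simp add: C_def algebra_simps)
  finally show ?thesis by (simp add: d_def u_def v_def)
qed

sublocale self_referential_bound g "xp k" "M k" "u_inv_coord xp k" A \<sigma> C \<beta>
proof
  have "g ` {0..1} \<subseteq> F ` unit_cube" by (auto simp: g_def intro!: imageI axis_in_unit_cube)
  then show "bounded (g ` {0..1})"
    using bounded_on_unit_cube[OF continuous_on_F] by (rule bounded_subset[rotated])
  show "xp k 0 = 0" "xp k (M k) = 1" "1 \<le> M k" using valid_partition_ends[OF part, of k] by auto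
  fix i assume i: "1 \<le> i" "i \<le> M k"
  show "A \<le> xp k i - xp k (i - 1)" using a_min_bounds(2)[OF part i] abs_aff_a[OF part i] by simp
  show "u_inv_coord xp k i (xp k (i - 1)) \<in> {0, 1} \<and> u_inv_coord xp k i (xp k i) \<in> {0, 1}"
    using u_inv_coord_endpoints[OF part i] by blast
  fix x y assume x: "x \<in> {xp k (i - 1)..xp k i}" and y: "y \<in> {xp k (i - 1)..xp k i}"
  show "u_inv_coord xp k i x \<in> {0..1}" using u_inv_coord_in_unit_interval[OF part i x] .
  show "\<bar>u_inv_coord xp k i x - u_inv_coord xp k i y\<bar> \<le> \<bar>x - y\<bar> / A"
    using u_inv_coord_expands[OF i] .
  show "\<bar>g x - g y\<bar>
      \<le> C * \<bar>x - y\<bar> powr \<sigma> + \<beta> * \<bar>g (u_inv_coord xp k i x) - g (u_inv_coord xp k i y)\<bar>"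
    using g_contraction[OF i x y] .
qed (use sig a_min_bounds(1)[OF part] C_nonneg \<beta>_bounds in auto)

end

theorem theorem4p14:
  fixes M :: "'q::finite \<Rightarrow> nat" and xp :: "'q \<Rightarrow> nat \<Rightarrow> real"
    and f \<alpha> s F :: "real^'q \<Rightarrow> real" and \<sigma> :: real and k0 :: 'q
  assumes part: "valid_partition M xp"
    and sig: "0 < \<sigma>" "\<sigma> \<le> 1"
    and hf: "holder_on \<sigma> unit_cube f"
    and ha: "holder_on \<sigma> unit_cube \<alpha>"
    and hs: "holder_on \<sigma> unit_cube s"
    and vert: "\<forall>v\<in>cube_vertices. s v = f v"
    and small: "max (sup_norm_on unit_cube \<alpha> / a_min M xp powr \<sigma>)
                    (sup_norm_on unit_cube \<alpha> + holder_seminorm \<sigma> unit_cube \<alpha>) < 1"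
    and frac: "is_alpha_fractal M xp f \<alpha> s F"
  shows "holder_on \<sigma> {0..1} (\<lambda>x. F (\<chi> k. if k = k0 then x else 0)) \<and>
    (let G = graph_of {0..1} (\<lambda>x. F (\<chi> k. if k = k0 then x else 0)) in
      1 \<le> hausdorff_dim G \<and> hausdorff_dim G \<le> lower_box_dim G \<and>
      lower_box_dim G \<le> upper_box_dim G \<and> upper_box_dim G \<le> ereal (2 - \<sigma>))"
proof -
  have "sup_norm_on unit_cube \<alpha> / a_min M xp powr \<sigma> < 1" using small by simp
  then interpret alpha_fractal_axis M xp f \<alpha> s F \<sigma> k0
    using part sig hf ha hs frac by unfold_locales
  have g_eq: "(\<lambda>x. F (\<chi> k. if k = k0 then x else 0)) = g" by (simp add: fun_eq_iff g_def axis_def)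
  have "compact (graph_of {0..1} g)"
    using compact_graph holder_on_imp_continuous_on[OF holder sig(1)] by blast
  moreover have "graph_of {0..1} g \<noteq> {}" by (auto simp: graph_of_def)
  ultimately show ?thesis
    unfolding g_eq Let_def
    by (intro conjI holder one_le_hausdorff_dim_graph hausdorff_dim_le_lower_box_dim
        lower_box_dim_le_upper_box_dim upper_box_dim_holder_graph[OF holder sig])
qed

end
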